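(* Assume that $g$ satisfies the Hölderian error bound $\frac{\alpha}{r}\,\mathrm{dist}(\mathbf{x},\mathcal{X}_g^* )^r\leq g(\mathbf{x}) - g^*$ for all $\mathbf{x}\in \mathcal{Z}$, with some $\alpha>0$ and $r\geq 1$, where $\mathrm{dist}(\mathbf{x},\mathcal{X}_g^* )=\inf_{\mathbf{x}'\in\mathcal{X}_g^*}\|\mathbf{x}-\mathbf{x}'\|$, and define $M= \max_{\mathbf{x}\in \mathcal{X}_g^*} \|\nabla f(\mathbf{x})\|_*$. Then for any $\hat{\mathbf{x}}\in\mathcal{Z}$ that satisfies $g(\hat{\mathbf{x}})-g^*\leq \epsilon_g$: (i) If $f$ is convex, then $f(\hat{\mathbf{x}})-f^* \geq -M \left(\frac{r\epsilon_g}{\alpha}\right)^{1/r}$. (ii) If $f$ is non-convex and has $L_f$-Lipschitz gradient, then $\mathcal{G}(\hat{\mathbf{x}}) \geq -M \left(\frac{r\epsilon_g}{\alpha}\right)^{1/r}- L_f\left(\frac{r\epsilon_g}{\alpha}\right)^{2/r}$.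
   Context: Consider the simple bilevel problem $\min_{\mathbf{x}\in\mathbb{R}^d} f(\mathbf{x})$ s.t. $\mathbf{x}\in \operatorname*{arg\,min}_{\mathbf{z}\in\mathcal{Z}} g(\mathbf{z})$, where $\mathcal{Z}\subset\mathbb{R}^d$ is convex and compact, $g$ is convex and continuously differentiable, and $f$ is continuously differentiable. $\|\cdot\|$ is a norm on $\mathbb{R}^d$ with dual norm $\|\cdot\|_*$. Let $g^*=\min_{\mathbf{z}\in\mathcal{Z}}g(\mathbf{z})$, $\mathcal{X}_g^*=\operatorname*{arg\,min}_{\mathbf{z}\in\mathcal{Z}}g(\mathbf{z})$, $f^*$ the optimal value of the bilevel problem, and $\mathcal{G}(\mathbf{x})=\max_{\mathbf{s}\in\mathcal{X}_g^*}\langle\nabla f(\mathbf{x}),\mathbf{x}-\mathbf{s}\rangle$ the Frank–Wolfe gap. *)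

theory Defs
  imports "HOL-Analysis.Analysis"
begin

definition is_norm :: "('a::euclidean_space \<Rightarrow> real) \<Rightarrow> bool" where
  "is_norm N \<longleftrightarrow> (\<forall>x. N x \<ge> 0) \<and> (\<forall>x. N x = 0 \<longleftrightarrow> x = 0)
     \<and> (\<forall>c x. N (c *\<^sub>R x) = \<bar>c\<bar> * N x) \<and> (\<forall>x y. N (x + y) \<le> N x + N y)"

definition dual_norm :: "('a::euclidean_space \<Rightarrow> real) \<Rightarrow> 'a \<Rightarrow> real" where
  "dual_norm N v = Sup {v \<bullet> y | y. N y \<le> 1}"

definition dist_N :: "('a::euclidean_space \<Rightarrow> real) \<Rightarrow> 'a \<Rightarrow> 'a set \<Rightarrow> real" where
  "dist_N N x S = Inf {N (x - y) | y. y \<in> S}"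

definition gstar :: "('a \<Rightarrow> real) \<Rightarrow> 'a set \<Rightarrow> real" where
  "gstar g Z = Inf (g ` Z)"

definition Xgstar :: "('a \<Rightarrow> real) \<Rightarrow> 'a set \<Rightarrow> 'a set" where
  "Xgstar g Z = {z \<in> Z. g z = gstar g Z}"

definition fstar :: "('a \<Rightarrow> real) \<Rightarrow> ('a \<Rightarrow> real) \<Rightarrow> 'a set \<Rightarrow> real" where
  "fstar f g Z = Inf (f ` Xgstar g Z)"

definition FW_gap :: "('a::euclidean_space \<Rightarrow> 'a) \<Rightarrow> ('a \<Rightarrow> real) \<Rightarrow> 'a set \<Rightarrow> 'a \<Rightarrow> real" where
  "FW_gap gradf g Z x = Sup ((\<lambda>s. gradf x \<bullet> (x - s)) ` Xgstar g Z)"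

end

theory Submission
  imports Defs
begin

text \<open>Let \<open>x\<^sub>s\<close> be a point of \<open>\<X>\<^sub>g\<^sup>*\<close> nearest to \<open>x\<close> in the norm \<open>N\<close>; it exists since
  \<open>\<X>\<^sub>g\<^sup>*\<close> is compact. The Hoelderian error bound gives \<open>N(x - x\<^sub>s) \<le> \<delta> = (r \<epsilon>\<^sub>g / \<alpha>)\<^bsup>1/r\<^esup>\<close>,
  so the generalised Cauchy--Schwarz inequality yields \<open>\<langle>\<nabla>f(x\<^sub>s), x - x\<^sub>s\<rangle> \<ge> -M \<delta>\<close>.
  For convex \<open>f\<close>, \<open>f(x) - f\<^sup>* \<ge> f(x) - f(x\<^sub>s) \<ge> \<langle>\<nabla>f(x\<^sub>s), x - x\<^sub>s\<rangle>\<close>. In general,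
  \<open>\<G>(x) \<ge> \<langle>\<nabla>f(x), x - x\<^sub>s\<rangle>\<close>, which differs from \<open>\<langle>\<nabla>f(x\<^sub>s), x - x\<^sub>s\<rangle>\<close> by at most
  \<open>L\<^sub>f \<delta>\<^sup>2\<close> by the Lipschitz continuity of the gradient.\<close>

lemma
  assumes "is_norm N"
  shows is_norm_nonneg: "N x \<ge> 0"
    and is_norm_eq_zero: "N x = 0 \<longleftrightarrow> x = 0"
    and is_norm_scaleR: "N (c *\<^sub>R x) = \<bar>c\<bar> * N x"
    and is_norm_triangle: "N (x + y) \<le> N x + N y"
    and is_norm_zero: "N 0 = 0"
  using assms by (auto simp: is_norm_def)

lemma is_norm_pos:
  "is_norm N \<Longrightarrow> x \<noteq> 0 \<Longrightarrow> N x > 0"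
  using is_norm_nonneg is_norm_eq_zero by (metis less_eq_real_def)

lemma convex_on_is_norm:
  assumes "is_norm N"
  shows "convex_on UNIV N"
proof (rule convex_onI)
  fix t :: real and x y assume t: "0 < t" "t < 1"
  have "N ((1 - t) *\<^sub>R x + t *\<^sub>R y) \<le> N ((1 - t) *\<^sub>R x) + N (t *\<^sub>R y)"
    by (rule is_norm_triangle[OF assms])
  with t show "N ((1 - t) *\<^sub>R x + t *\<^sub>R y) \<le> (1 - t) * N x + t * N y"
    by (simp add: is_norm_scaleR[OF assms])
qed simp

lemma continuous_on_is_norm:
  "is_norm N \<Longrightarrow> continuous_on UNIV N"
  by (simp add: convex_on_continuous convex_on_is_norm)

lemma is_norm_ge_norm:
  fixes N :: "'a::euclidean_space \<Rightarrow> real"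
  assumes N: "is_norm N"
  obtains c where "c > 0" "\<And>x. c * norm x \<le> N x"
proof -
  obtain b :: 'a where "b \<in> Basis" using nonempty_Basis by blast
  then have "sphere (0::'a) 1 \<noteq> {}" by (auto intro!: exI[of _ b])
  then obtain u where u: "u \<in> sphere 0 1" "\<And>y. y \<in> sphere 0 1 \<Longrightarrow> N u \<le> N y"
    using continuous_attains_inf[of "sphere 0 1" N] continuous_on_is_norm[OF N]
    by (metis compact_sphere continuous_on_subset top_greatest)
  have "N u * norm x \<le> N x" for x
  proof (cases "x = 0")
    case False
    then have "N u \<le> N ((1 / norm x) *\<^sub>R x)" by (intro u(2)) simp
    with False show ?thesis by (simp add: is_norm_scaleR[OF N] field_simps)
  qed (simp add: is_norm_zero[OF N])
  moreover have "N u > 0" using u(1) by (intro is_norm_pos[OF N]) auto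
  ultimately show thesis using that by blast
qed

lemma inner_le_norm_on_unit_ball:
  fixes N :: "'a::euclidean_space \<Rightarrow> real"
  assumes N: "is_norm N"
  obtains R where "R \<ge> 0" "\<And>v y. N y \<le> 1 \<Longrightarrow> v \<bullet> y \<le> R * norm v"
proof -
  obtain c where c: "c > 0" "\<And>x. c * norm x \<le> N x" using is_norm_ge_norm[OF N] by blast
  have "v \<bullet> y \<le> (1 / c) * norm v" if "N y \<le> 1" for v y
  proof -
    have "norm y \<le> 1 / c" using c(2)[of y] that c(1) by (simp add: field_simps)
    then have "norm v * norm y \<le> norm v * (1 / c)" by (rule mult_left_mono) simp
    then show ?thesis using norm_cauchy_schwarz[of v y] by simp
  qed
  moreover have "1 / c \<ge> 0" using c(1) by simp
  ultimately show thesis using that by blast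
qed

lemma bdd_above_dual_norm_set:
  assumes N: "is_norm N"
  shows "bdd_above {v \<bullet> y | y. N y \<le> 1}"
proof -
  obtain R where "\<And>v y. N y \<le> 1 \<Longrightarrow> v \<bullet> y \<le> R * norm v"
    using inner_le_norm_on_unit_ball[OF N] by blast
  then show ?thesis by (intro bdd_aboveI[of _ "R * norm v"]) blast
qed

lemma inner_le_dual_norm:
  assumes N: "is_norm N"
  shows "v \<bullet> y \<le> dual_norm N v * N y"
proof (cases "y = 0")
  case False
  then have Ny: "N y > 0" by (rule is_norm_pos[OF N])
  then have "N ((1 / N y) *\<^sub>R y) \<le> 1" by (simp add: is_norm_scaleR[OF N])
  then have "v \<bullet> ((1 / N y) *\<^sub>R y) \<le> dual_norm N v"
    unfolding dual_norm_def by (intro cSup_upper bdd_above_dual_norm_set[OF N]) blast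
  with Ny show ?thesis by (simp add: field_simps)
qed (simp add: is_norm_zero[OF N])

lemma abs_inner_le_dual_norm:
  assumes N: "is_norm N"
  shows "\<bar>v \<bullet> y\<bar> \<le> dual_norm N v * N y"
  using inner_le_dual_norm[OF N, of v y] inner_le_dual_norm[OF N, of v "-y"]
    is_norm_scaleR[OF N, of "-1" y] by simp

lemma dual_norm_nonneg:
  assumes N: "is_norm N"
  shows "dual_norm N v \<ge> 0"
  unfolding dual_norm_def
  by (rule cSup_upper2[where x = "v \<bullet> 0"])
    (auto intro!: exI[of _ 0] simp: is_norm_zero[OF N] bdd_above_dual_norm_set[OF N])

lemma dual_norm_le_norm:
  assumes N: "is_norm N"
  obtains R where "R \<ge> 0" "\<And>v. dual_norm N v \<le> R * norm v"
proof -
  obtain R where R: "R \<ge> 0" "\<And>v y. N y \<le> 1 \<Longrightarrow> v \<bullet> y \<le> R * norm v"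
    using inner_le_norm_on_unit_ball[OF N] by blast
  have "dual_norm N v \<le> R * norm v" for v
    unfolding dual_norm_def
  proof (rule cSup_least)
    show "{v \<bullet> y | y. N y \<le> 1} \<noteq> {}" by (auto intro!: exI[of _ 0] simp: is_norm_zero[OF N])
  qed (use R(2) in blast)
  with R(1) show thesis by (rule that)
qed

lemma bdd_above_dual_norm_image:
  assumes N: "is_norm N" and X: "compact X" and G: "continuous_on X G"
  shows "bdd_above ((\<lambda>x. dual_norm N (G x)) ` X)"
proof -
  obtain R where R: "R \<ge> 0" "\<And>v. dual_norm N v \<le> R * norm v"
    using dual_norm_le_norm[OF N] by blast
  obtain B where B: "\<And>x. x \<in> X \<Longrightarrow> norm (G x) \<le> B"
    using compact_imp_bounded[OF compact_continuous_image[OF G X]] by (auto simp: bounded_iff)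
  have "dual_norm N (G x) \<le> R * B" if "x \<in> X" for x
    using R(2)[of "G x"] mult_left_mono[OF B[OF that] R(1)] by linarith
  then show ?thesis by (intro bdd_aboveI[of _ "R * B"]) blast
qed

lemma dist_N_attained:
  assumes N: "is_norm N" and S: "compact S" "S \<noteq> {}"
  obtains p where "p \<in> S" "dist_N N x S = N (x - p)"
proof -
  have "continuous_on S (\<lambda>y. N (x - y))"
    by (intro continuous_on_compose2[OF continuous_on_is_norm[OF N]] continuous_intros) auto
  then obtain p where p: "p \<in> S" "\<And>y. y \<in> S \<Longrightarrow> N (x - p) \<le> N (x - y)"
    using continuous_attains_inf[OF S] by blast
  then have "dist_N N x S = N (x - p)"
    unfolding dist_N_def by (intro cInf_eq_minimum) auto
  with p(1) show thesis by (rule that)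
qed

lemma scaled_powr_le_imp_le:
  fixes d \<alpha> r \<epsilon> :: real
  assumes "0 \<le> d" "0 < \<alpha>" "0 < r" "\<alpha> / r * d powr r \<le> \<epsilon>"
  shows "d \<le> (r * \<epsilon> / \<alpha>) powr (1 / r)"
proof -
  have "d powr r \<le> r * \<epsilon> / \<alpha>" using assms by (simp add: field_simps)
  then have "(d powr r) powr (1 / r) \<le> (r * \<epsilon> / \<alpha>) powr (1 / r)"
    using assms by (intro powr_mono2) auto
  with assms show ?thesis by (simp add: powr_powr)
qed

lemma compact_Xgstar:
  fixes Z :: "'a::t2_space set"
  assumes "compact Z" "continuous_on Z g"
  shows "compact (Xgstar g Z)"
proof -
  have "closed (Xgstar g Z)"
    unfolding Xgstar_def
    using continuous_closed_preimage_constant[OF assms(2) compact_imp_closed[OF assms(1)]] .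
  then have "compact (Xgstar g Z \<inter> Z)" using assms(1) by (rule closed_Int_compact)
  moreover have "Xgstar g Z \<inter> Z = Xgstar g Z" by (auto simp: Xgstar_def)
  ultimately show ?thesis by simp
qed

lemma Xgstar_nonempty:
  assumes "compact Z" "Z \<noteq> {}" "continuous_on Z g"
  shows "Xgstar g Z \<noteq> {}"
proof -
  obtain z where z: "z \<in> Z" "\<And>y. y \<in> Z \<Longrightarrow> g z \<le> g y"
    using continuous_attains_inf[OF assms] by blast
  then have "gstar g Z = g z" unfolding gstar_def by (intro cInf_eq_minimum) auto
  with z(1) show ?thesis unfolding Xgstar_def by auto
qed

lemma fstar_le:
  assumes "compact (Xgstar g Z)" "continuous_on (Xgstar g Z) f" "x \<in> Xgstar g Z"
  shows "fstar f g Z \<le> f x"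
proof -
  have "bdd_below (f ` Xgstar g Z)"
    using assms(1,2) by (intro bounded_imp_bdd_below compact_imp_bounded compact_continuous_image)
  with assms(3) show ?thesis unfolding fstar_def by (intro cInf_lower imageI)
qed

lemma FW_gap_ge:
  assumes "compact (Xgstar g Z)" "s \<in> Xgstar g Z"
  shows "gradf x \<bullet> (x - s) \<le> FW_gap gradf g Z x"
proof -
  have "continuous_on (Xgstar g Z) (\<lambda>s. gradf x \<bullet> (x - s))" by (intro continuous_intros)
  then have "bdd_above ((\<lambda>s. gradf x \<bullet> (x - s)) ` Xgstar g Z)"
    using assms(1) by (intro bounded_imp_bdd_above compact_imp_bounded compact_continuous_image)
  with assms(2) show ?thesis unfolding FW_gap_def by (rule cSUP_upper)
qed

lemma convex_on_imp_above_linearization: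
  fixes f :: "'a::real_normed_vector \<Rightarrow> real"
  assumes f: "convex_on UNIV f" and f': "(f has_derivative f') (at x)"
  shows "f y - f x \<ge> f' (y - x)"
proof -
  define \<phi> where "\<phi> = (\<lambda>t::real. f (x + t *\<^sub>R (y - x)))"
  have "convex_on UNIV \<phi>"
  proof (rule convex_onI)
    fix t a b :: real assume t: "0 < t" "t < 1"
    have "x + ((1 - t) * a + t * b) *\<^sub>R (y - x)
        = (1 - t) *\<^sub>R (x + a *\<^sub>R (y - x)) + t *\<^sub>R (x + b *\<^sub>R (y - x))"
      by (simp add: algebra_simps)
    with t show "\<phi> ((1 - t) *\<^sub>R a + t *\<^sub>R b) \<le> (1 - t) * \<phi> a + t * \<phi> b"
      unfolding \<phi>_def using convex_onD[OF f, of t] by simp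
  qed simp
  moreover have "(\<phi> has_field_derivative f' (y - x)) (at 0)"
  proof -
    have "((\<lambda>t. x + t *\<^sub>R (y - x)) has_derivative (\<lambda>t. t *\<^sub>R (y - x))) (at 0)"
      by (auto intro!: derivative_eq_intros)
    moreover have "(f has_derivative f') (at (x + 0 *\<^sub>R (y - x)))" using f' by simp
    ultimately have "(\<phi> has_derivative (\<lambda>t. f' (t *\<^sub>R (y - x)))) (at 0)"
      unfolding \<phi>_def by (rule diff_chain_at[unfolded o_def])
    moreover have "(\<lambda>t. f' (t *\<^sub>R (y - x))) = (*) (f' (y - x))"
      by (simp add: fun_eq_iff linear_cmul[OF has_derivative_linear[OF f']])
    ultimately show ?thesis by (simp add: has_field_derivative_def)
  qed
  ultimately have "\<phi> 1 - \<phi> 0 \<ge> f' (y - x) * (1 - 0)"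
    by (intro convex_on_imp_above_tangent) auto
  then show ?thesis by (simp add: \<phi>_def)
qed

lemma dual_lipschitz_const_nonneg:
  fixes G :: "'a::euclidean_space \<Rightarrow> 'a"
  assumes N: "is_norm N" and G: "\<And>x y. dual_norm N (G x - G y) \<le> L * N (x - y)"
  shows "L \<ge> 0"
proof -
  obtain b :: 'a where "b \<in> Basis" using nonempty_Basis by blast
  then have "N b > 0" by (intro is_norm_pos[OF N]) auto
  moreover have "0 \<le> L * N b"
    using G[of b 0] dual_norm_nonneg[OF N, of "G b - G 0"] by simp
  ultimately show ?thesis by (simp add: zero_le_mult_iff)
qed

lemma inner_diff_ge_if_dual_lipschitz:
  fixes G :: "'a::euclidean_space \<Rightarrow> 'a"
  assumes N: "is_norm N" and G: "\<And>x y. dual_norm N (G x - G y) \<le> L * N (x - y)"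
    and xy: "N (x - y) \<le> \<delta>"
  shows "(G x - G y) \<bullet> (x - y) \<ge> - L * \<delta>\<^sup>2"
proof -
  have L: "L \<ge> 0" by (rule dual_lipschitz_const_nonneg[OF N G])
  have "\<bar>(G x - G y) \<bullet> (x - y)\<bar> \<le> dual_norm N (G x - G y) * N (x - y)"
    by (rule abs_inner_le_dual_norm[OF N])
  also have "\<dots> \<le> L * N (x - y) * N (x - y)"
    using G is_norm_nonneg[OF N] by (rule mult_right_mono)
  also have "\<dots> \<le> L * \<delta>\<^sup>2"
    using L xy is_norm_nonneg[OF N, of "x - y"]
    by (simp add: power2_eq_square mult.assoc mult_left_mono mult_mono)
  finally show ?thesis by linarith
qed

theorem proposition1:
  fixes f g :: "'a::euclidean_space \<Rightarrow> real"
    and gradf gradg :: "'a \<Rightarrow> 'a"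
    and Z :: "'a set" and N :: "'a \<Rightarrow> real"
    and \<alpha> r \<epsilon>g :: real and xhat :: 'a
  assumes norm: "is_norm N"
    and Z: "convex Z" "compact Z"
    and g_conv: "convex_on UNIV g"
    and g_grad: "\<And>x. (g has_derivative (\<lambda>h. gradg x \<bullet> h)) (at x)"
    and g_C1: "continuous_on UNIV gradg"
    and f_grad: "\<And>x. (f has_derivative (\<lambda>h. gradf x \<bullet> h)) (at x)"
    and f_C1: "continuous_on UNIV gradf"
    and \<alpha>: "\<alpha> > 0" and r: "r \<ge> 1"
    and holder: "\<And>x. x \<in> Z \<Longrightarrow>
        (\<alpha> / r) * (dist_N N x (Xgstar g Z)) powr r \<le> g x - gstar g Z"
    and xhat: "xhat \<in> Z" "g xhat - gstar g Z \<le> \<epsilon>g"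
  shows "(convex_on UNIV f \<longrightarrow>
            f xhat - fstar f g Z \<ge>
              - (Sup ((\<lambda>x. dual_norm N (gradf x)) ` Xgstar g Z)) * (r * \<epsilon>g / \<alpha>) powr (1 / r))
       \<and> (\<forall>Lf. (\<forall>x y. dual_norm N (gradf x - gradf y) \<le> Lf * N (x - y)) \<longrightarrow>
            FW_gap gradf g Z xhat \<ge>
              - (Sup ((\<lambda>x. dual_norm N (gradf x)) ` Xgstar g Z)) * (r * \<epsilon>g / \<alpha>) powr (1 / r)
              - Lf * (r * \<epsilon>g / \<alpha>) powr (2 / r))"
proof -
  let ?X = "Xgstar g Z"
  define M where "M = Sup ((\<lambda>x. dual_norm N (gradf x)) ` ?X)"
  define \<delta> where "\<delta> = (r * \<epsilon>g / \<alpha>) powr (1 / r)"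
  have cont: "continuous_on S g" "continuous_on S f" "continuous_on S gradf" for S
    using g_grad f_grad continuous_on_subset[OF f_C1]
    by (auto intro: continuous_at_imp_continuous_on has_derivative_continuous)
  have X: "compact ?X" "?X \<noteq> {}"
    using compact_Xgstar Xgstar_nonempty Z(2) xhat(1) cont by blast+
  obtain xs where xs: "xs \<in> ?X" "dist_N N xhat ?X = N (xhat - xs)"
    using dist_N_attained[OF norm X] by blast
  have near: "N (xhat - xs) \<le> \<delta>"
    unfolding \<delta>_def using holder[OF xhat(1)] xhat(2) xs(2) \<alpha> r
    by (intro scaled_powr_le_imp_le is_norm_nonneg[OF norm]) auto
  have M: "dual_norm N (gradf xs) \<le> M"
    unfolding M_def by (rule cSUP_upper[OF xs(1) bdd_above_dual_norm_image[OF norm X(1) cont(3)]])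
  have "\<bar>gradf xs \<bullet> (xhat - xs)\<bar> \<le> dual_norm N (gradf xs) * N (xhat - xs)"
    by (rule abs_inner_le_dual_norm[OF norm])
  also have "\<dots> \<le> M * \<delta>"
    using M near dual_norm_nonneg[OF norm] is_norm_nonneg[OF norm]
    by (intro mult_mono) (auto intro: order_trans)
  finally have first_order: "gradf xs \<bullet> (xhat - xs) \<ge> - M * \<delta>"
    by (simp add: abs_le_iff)
  have convex: "f xhat - fstar f g Z \<ge> - M * \<delta>" if "convex_on UNIV f"
    using convex_on_imp_above_linearization[OF that f_grad, of xs xhat]
      fstar_le[OF X(1) cont(2) xs(1)] first_order by linarith
  have nonconvex: "FW_gap gradf g Z xhat \<ge> - M * \<delta> - Lf * \<delta>\<^sup>2"
    if "\<forall>x y. dual_norm N (gradf x - gradf y) \<le> Lf * N (x - y)" for Lf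
    using FW_gap_ge[OF X(1) xs(1), of gradf xhat]
      inner_diff_ge_if_dual_lipschitz[OF norm, of gradf Lf xhat xs \<delta>] that near first_order
    by (simp add: inner_diff_left)
  have "\<delta>\<^sup>2 = (r * \<epsilon>g / \<alpha>) powr (2 / r)"
    unfolding \<delta>_def power2_eq_square powr_add[symmetric] by simp
  with convex nonconvex show ?thesis unfolding M_def \<delta>_def by simp
qed

end
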